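(* Let $x$ be an element of a commutative ring $R$, $U$ a variable, $M$ an $R$-module and $\hat{M}^{xR}=\varprojlim_n M/x^nM$ its $xR$-adic completion. Then: (a) $H_0(x-U;M[[U]])\cong M[[U]]/(x-U)M[[U]]$, and the map $\sum_{i\ge0}m_iU^i\mapsto\big(\sum_{i<n}x^im_i+x^nM\big)_{n}$ induces an epimorphism $M[[U]]/(x-U)M[[U]]\twoheadrightarrow\hat{M}^{xR}$. (b) $H_1(x-U;M[[U]])\cong\ker\big(\operatorname{Hom}_R(R_x,M)\to M\big)$, where the map sends $\varphi$ to $\varphi(1)$. (c) If $M$ is of bounded $xR$-torsion, then $H_1(x-U;M[[U]])=0$ and $H_0(x-U;M[[U]])\cong\hat{M}^{xR}$ (via the map in (a)).
   Context: $M[[U]]$ is the module of formal power series over $M$, an $R[U]$-module; $H_i(x-U;M[[U]])$ denotes the homology of the Koszul complex $0\to M[[U]]\xrightarrow{x-U}M[[U]]\to0$ (homological degrees $1,0$). $M$ is of bounded $xR$-torsion if there is $k$ with $0:_Mx^k=0:_Mx^{k+j}$ for all $j\ge0$. *)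

theory Defs
  imports Main "HOL.Modules"
begin

text \<open>Formal power series M[[U]] are functions nat => 'm
(coefficient sequences).\<close>

text \<open>The Koszul differential: multiplication by x - U on M[[U]].\<close>
definition koszul_d :: "('r::comm_ring_1 \<Rightarrow> 'm::ab_group_add \<Rightarrow> 'm) \<Rightarrow> 'r \<Rightarrow> (nat \<Rightarrow> 'm) \<Rightarrow> (nat \<Rightarrow> 'm)" where
  "koszul_d sc x g = (\<lambda>i. sc x (g i) - (if i = 0 then 0 else g (i - 1)))"

definition H1 :: "('r::comm_ring_1 \<Rightarrow> 'm::ab_group_add \<Rightarrow> 'm) \<Rightarrow> 'r \<Rightarrow> (nat \<Rightarrow> 'm) set" where
  "H1 sc x = {f. koszul_d sc x f = (\<lambda>_. 0)}"

text \<open>(x-U)M[[U]], the image of x - U; H_0 = M[[U]] / this submodule.\<close>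
definition Bd :: "('r::comm_ring_1 \<Rightarrow> 'm::ab_group_add \<Rightarrow> 'm) \<Rightarrow> 'r \<Rightarrow> (nat \<Rightarrow> 'm) set" where
  "Bd sc x = range (koszul_d sc x)"

definition xpowM :: "('r::comm_ring_1 \<Rightarrow> 'm::ab_group_add \<Rightarrow> 'm) \<Rightarrow> 'r \<Rightarrow> nat \<Rightarrow> 'm set" where
  "xpowM sc x n = range (sc (x ^ n))"

text \<open>xR-adic completion: elements of lim_n M/x^nM are represented by sequences c with
c n a representative in M/x^n M; compatibility c (n+1) = c n mod x^n M; two representatives
give the same element iff c n - c' n lies in x^n M for all n.\<close>
definition compl_seqs :: "('r::comm_ring_1 \<Rightarrow> 'm::ab_group_add \<Rightarrow> 'm) \<Rightarrow> 'r \<Rightarrow> (nat \<Rightarrow> 'm) set" where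
  "compl_seqs sc x = {c. \<forall>n. c (Suc n) - c n \<in> xpowM sc x n}"

definition compl_eq :: "('r::comm_ring_1 \<Rightarrow> 'm::ab_group_add \<Rightarrow> 'm) \<Rightarrow> 'r \<Rightarrow> (nat \<Rightarrow> 'm) \<Rightarrow> (nat \<Rightarrow> 'm) \<Rightarrow> bool" where
  "compl_eq sc x c c' \<longleftrightarrow> (\<forall>n. c n - c' n \<in> xpowM sc x n)"

definition Phi :: "('r::comm_ring_1 \<Rightarrow> 'm::ab_group_add \<Rightarrow> 'm) \<Rightarrow> 'r \<Rightarrow> (nat \<Rightarrow> 'm) \<Rightarrow> (nat \<Rightarrow> 'm)" where
  "Phi sc x f = (\<lambda>n. \<Sum>i<n. sc (x ^ i) (f i))"

text \<open>Localization R_x: classes of pairs (a,n) standing for a/x^n.\<close>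
definition loc_rel :: "'r::comm_ring_1 \<Rightarrow> (('r \<times> nat) \<times> ('r \<times> nat)) set" where
  "loc_rel x = {((a,n),(b,m)). \<exists>k. x ^ k * (x ^ m * a - x ^ n * b) = 0}"

definition loc_cls :: "'r::comm_ring_1 \<Rightarrow> 'r \<Rightarrow> nat \<Rightarrow> ('r \<times> nat) set" where
  "loc_cls x a n = loc_rel x `` {(a,n)}"

definition Loc :: "'r::comm_ring_1 \<Rightarrow> ('r \<times> nat) set set" where
  "Loc x = UNIV // loc_rel x"

text \<open>Hom_R(R_x, M): R-linear maps on R_x (extensional: 0 outside R_x).
Addition in R_x: a/x^n + b/x^m = (a x^m + b x^n)/x^(n+m); R-action r(a/x^n) = (ra)/x^n.\<close>
definition HomLoc :: "('r::comm_ring_1 \<Rightarrow> 'm::ab_group_add \<Rightarrow> 'm) \<Rightarrow> 'r \<Rightarrow> (('r \<times> nat) set \<Rightarrow> 'm) set" where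
  "HomLoc sc x = {\<phi>. (\<forall>P. P \<notin> Loc x \<longrightarrow> \<phi> P = 0)
     \<and> (\<forall>a n b m. \<phi> (loc_cls x (a * x ^ m + b * x ^ n) (n + m)) = \<phi> (loc_cls x a n) + \<phi> (loc_cls x b m))
     \<and> (\<forall>r a n. \<phi> (loc_cls x (r * a) n) = sc r (\<phi> (loc_cls x a n)))}"

definition KerEv :: "('r::comm_ring_1 \<Rightarrow> 'm::ab_group_add \<Rightarrow> 'm) \<Rightarrow> 'r \<Rightarrow> (('r \<times> nat) set \<Rightarrow> 'm) set" where
  "KerEv sc x = {\<phi> \<in> HomLoc sc x. \<phi> (loc_cls x 1 0) = 0}"

definition bounded_torsion :: "('r::comm_ring_1 \<Rightarrow> 'm::ab_group_add \<Rightarrow> 'm) \<Rightarrow> 'r \<Rightarrow> bool" where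
  "bounded_torsion sc x \<longleftrightarrow> (\<exists>k. \<forall>j. {m. sc (x ^ k) m = 0} = {m. sc (x ^ (k + j)) m = 0})"

end

theory Submission
  imports Defs
begin

text \<open>
  A series f lies in the kernel of x - U iff g = U f satisfies g 0 = 0 and x g (n+1) = g n,
  i.e. iff a/x^n \<mapsto> a g n is a well-defined R-linear map R_x \<rightarrow> M vanishing at 1; this is (b).
  Phi sends (x - U) h to the sequence x^n (U h) n, so it factors through H_0, and a compatible
  sequence c is hit by the series of successive differences (c (n+1) - c n) / x^n.
  For (c), let x^k kill every element killed by some power of x, and let the truncations of d
  be S n = x^n z n. Then H n = x^k z (n+k) - (\<Sum>t<k. x^t d (n+t)) is a version of S n / x^n:
  the obstruction to x H (n+1) - H n = d n is killed by x^(n+k), hence by x^k, so h n = H (n+1)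
  solves (x - U) h = d.
\<close>

definition mult_U :: "(nat \<Rightarrow> 'b::zero) \<Rightarrow> nat \<Rightarrow> 'b" where
  "mult_U f n = (if n = 0 then 0 else f (n - 1))"

lemma mult_U_0 [simp]: "mult_U f 0 = 0"
  and mult_U_Suc [simp]: "mult_U f (Suc n) = f n"
  by (simp_all add: mult_U_def)

lemma koszul_d_eq: "koszul_d sc x h n = sc x (h n) - mult_U h n"
  by (simp add: koszul_d_def mult_U_def)

context module
begin

lemma Phi_in_compl_seqs: "Phi scale x f \<in> compl_seqs scale x"
  by (simp add: compl_seqs_def Phi_def xpowM_def)

lemma Phi_add: "Phi scale x (\<lambda>i. f i + g i) = (\<lambda>n. Phi scale x f n + Phi scale x g n)"
  by (simp add: Phi_def scale_right_distrib sum.distrib)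

lemma Phi_diff: "Phi scale x (\<lambda>i. f i - g i) = (\<lambda>n. Phi scale x f n - Phi scale x g n)"
  by (simp add: Phi_def scale_right_diff_distrib sum_subtractf)

lemma Phi_scale: "Phi scale x (\<lambda>i. r *s f i) = (\<lambda>n. r *s Phi scale x f n)"
  by (simp add: Phi_def scale_sum_right mult.commute)

lemma Phi_koszul_d: "Phi scale x (koszul_d scale x h) n = (x ^ n) *s mult_U h n"
proof (induction n)
  case (Suc n)
  have "Phi scale x (koszul_d scale x h) (Suc n)
      = Phi scale x (koszul_d scale x h) n + (x ^ n) *s koszul_d scale x h n"
    by (simp add: Phi_def)
  also have "\<dots> = (x ^ n) *s mult_U h n + (x ^ n) *s (x *s h n - mult_U h n)"
    by (simp add: koszul_d_eq Suc.IH)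
  also have "\<dots> = (x ^ Suc n) *s h n"
    by (simp add: scale_right_diff_distrib mult.commute)
  finally show ?case by simp
qed (simp add: Phi_def)

lemma compl_eq_Phi_if_diff_in_Bd:
  assumes "(\<lambda>i. f i - g i) \<in> Bd scale x"
  shows "compl_eq scale x (Phi scale x f) (Phi scale x g)"
proof -
  obtain h where h: "(\<lambda>i. f i - g i) = koszul_d scale x h"
    using assms by (auto simp: Bd_def)
  have "Phi scale x f n - Phi scale x g n = (x ^ n) *s mult_U h n" for n
    using Phi_koszul_d[of x h n] by (simp add: Phi_diff flip: h)
  then show ?thesis by (simp add: compl_eq_def xpowM_def)
qed

lemma Phi_surj_compl_seqs:
  assumes "c \<in> compl_seqs scale x"
  shows "\<exists>f. compl_eq scale x (Phi scale x f) c"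
proof -
  obtain y where y: "\<And>n. c (Suc n) - c n = (x ^ n) *s y n"
    using assms by (simp add: compl_seqs_def xpowM_def image_iff) metis
  define f where "f n = (if n = 0 then c 1 else y n)" for n
  have Phi_f: "Phi scale x f (Suc n) = c (Suc n)" for n
  proof (induction n)
    case (Suc n)
    then show ?case using y[of "Suc n"] by (simp add: Phi_def f_def algebra_simps)
  qed (simp add: Phi_def f_def)
  have "Phi scale x f n - c n \<in> xpowM scale x n" for n
    by (cases n) (auto simp: Phi_f xpowM_def image_iff intro: exI[of _ 0])
  then show ?thesis by (auto simp: compl_eq_def)
qed

lemma mem_H1_iff: "f \<in> H1 scale x \<longleftrightarrow> (\<forall>n. x *s mult_U f (Suc n) = mult_U f n)"
  by (auto simp: H1_def koszul_d_eq fun_eq_iff)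

lemma H1_scale_power:
  assumes "f \<in> H1 scale x"
  shows "(x ^ j) *s mult_U f (n + j) = mult_U f n"
proof (induction j)
  case (Suc j)
  have "(x ^ Suc j) *s mult_U f (n + Suc j) = (x ^ j) *s (x *s mult_U f (Suc (n + j)))"
    by (simp add: mult.commute del: mult_U_Suc)
  also have "\<dots> = (x ^ j) *s mult_U f (n + j)"
    using assms by (simp only: mem_H1_iff)
  finally show ?case using Suc.IH by simp
qed simp

lemma loc_rel_equiv: "equiv UNIV (loc_rel x)"
proof (rule equivI)
  show "refl (loc_rel x)" by (auto simp: refl_on_def loc_rel_def intro: exI[of _ 0])
  show "sym (loc_rel x)"
  proof (rule symI)
    fix p q assume "(p, q) \<in> loc_rel x"
    then obtain a n b m k where "p = (a, n)" "q = (b, m)" "x ^ k * (x ^ m * a - x ^ n * b) = 0"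
      by (auto simp: loc_rel_def)
    moreover from this have "x ^ k * (x ^ n * b - x ^ m * a) = 0"
      by (simp add: algebra_simps)
    ultimately show "(q, p) \<in> loc_rel x"
      by (auto simp: loc_rel_def)
  qed
  show "trans (loc_rel x)"
  proof (rule transI)
    fix p q r assume "(p, q) \<in> loc_rel x" "(q, r) \<in> loc_rel x"
    then obtain a n b m c l k j where pqr: "p = (a, n)" "q = (b, m)" "r = (c, l)"
      and k: "x ^ k * (x ^ m * a - x ^ n * b) = 0" and j: "x ^ j * (x ^ l * b - x ^ m * c) = 0"
      by (auto simp: loc_rel_def)
    have "x ^ (k + j + m) * (x ^ l * a - x ^ n * c)
        = x ^ j * x ^ l * (x ^ k * (x ^ m * a - x ^ n * b))
          + x ^ k * x ^ n * (x ^ j * (x ^ l * b - x ^ m * c))"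
      by (simp add: power_add algebra_simps)
    then show "(p, r) \<in> loc_rel x"
      using pqr k j by (auto simp: loc_rel_def)
  qed
qed simp

lemma loc_cls_eq: "((a, n), (b, m)) \<in> loc_rel x \<Longrightarrow> loc_cls x a n = loc_cls x b m"
  unfolding loc_cls_def using loc_rel_equiv by (rule equiv_class_eq)

lemma loc_cls_in_Loc: "loc_cls x a n \<in> Loc x"
  by (simp add: loc_cls_def Loc_def quotientI)

lemma mem_loc_cls_self: "(a, n) \<in> loc_cls x a n"
  by (simp add: loc_cls_def loc_rel_def)

lemma Loc_cases:
  assumes "P \<in> Loc x"
  obtains a n where "P = loc_cls x a n"
  using assms by (auto simp: Loc_def loc_cls_def quotient_def)

definition hom_of_cycle :: "'a \<Rightarrow> (nat \<Rightarrow> 'b) \<Rightarrow> ('a \<times> nat) set \<Rightarrow> 'b" where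
  "hom_of_cycle x f P =
     (if P \<in> Loc x then (let p = SOME p. p \<in> P in fst p *s mult_U f (snd p)) else 0)"

lemma hom_of_cycle_outside_Loc: "P \<notin> Loc x \<Longrightarrow> hom_of_cycle x f P = 0"
  by (simp add: hom_of_cycle_def)

lemma cycle_value_respects_loc_rel:
  assumes "f \<in> H1 scale x" and "((a, n), (b, m)) \<in> loc_rel x"
  shows "a *s mult_U f n = b *s mult_U f m"
proof -
  obtain k where "x ^ k * (x ^ m * a - x ^ n * b) = 0"
    using assms(2) by (auto simp: loc_rel_def)
  then have e: "x ^ k * x ^ m * a = x ^ k * x ^ n * b"
    by (simp add: algebra_simps)
  have "a *s mult_U f n = a *s ((x ^ (m + k)) *s mult_U f (n + (m + k)))"
    using H1_scale_power[OF assms(1)] by simp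
  also have "\<dots> = (x ^ k * x ^ m * a) *s mult_U f (n + m + k)"
    by (simp add: power_add ac_simps)
  also have "\<dots> = (x ^ k * x ^ n * b) *s mult_U f (m + (n + k))"
    using e by (simp add: ac_simps)
  also have "\<dots> = b *s ((x ^ (n + k)) *s mult_U f (m + (n + k)))"
    by (simp add: power_add ac_simps)
  also have "\<dots> = b *s mult_U f m"
    using H1_scale_power[OF assms(1)] by simp
  finally show ?thesis .
qed

lemma hom_of_cycle_loc_cls:
  assumes "f \<in> H1 scale x"
  shows "hom_of_cycle x f (loc_cls x a n) = a *s mult_U f n"
proof -
  let ?p = "SOME p. p \<in> loc_cls x a n"
  have "?p \<in> loc_cls x a n" using mem_loc_cls_self by (rule someI)
  then have "((a, n), ?p) \<in> loc_rel x" by (simp add: loc_cls_def)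
  then have "fst ?p *s mult_U f (snd ?p) = a *s mult_U f n"
    using cycle_value_respects_loc_rel[OF assms, of a n "fst ?p" "snd ?p"] by simp
  then show ?thesis by (simp add: hom_of_cycle_def loc_cls_in_Loc Let_def)
qed

lemma hom_of_cycle_in_KerEv:
  assumes "f \<in> H1 scale x"
  shows "hom_of_cycle x f \<in> KerEv scale x"
proof -
  have "hom_of_cycle x f (loc_cls x (a * x ^ m + b * x ^ n) (n + m))
      = hom_of_cycle x f (loc_cls x a n) + hom_of_cycle x f (loc_cls x b m)" for a n b m
    using H1_scale_power[OF assms, of m n] H1_scale_power[OF assms, of n m]
    by (simp add: hom_of_cycle_loc_cls[OF assms] scale_left_distrib ac_simps flip: scale_scale)
  then show ?thesis
    by (simp add: KerEv_def HomLoc_def hom_of_cycle_outside_Loc hom_of_cycle_loc_cls[OF assms])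
qed

lemma inj_on_hom_of_cycle: "inj_on (hom_of_cycle x) (H1 scale x)"
proof (rule inj_onI)
  fix f g assume f: "f \<in> H1 scale x" and g: "g \<in> H1 scale x"
    and eq: "hom_of_cycle x f = hom_of_cycle x g"
  show "f = g"
  proof
    fix n
    show "f n = g n"
      using fun_cong[OF eq, of "loc_cls x 1 (Suc n)"] by (simp add: hom_of_cycle_loc_cls f g)
  qed
qed

lemma KerEv_subset_hom_of_cycle_image: "KerEv scale x \<subseteq> hom_of_cycle x ` H1 scale x"
proof
  fix \<phi> assume "\<phi> \<in> KerEv scale x"
  then have zero: "\<And>P. P \<notin> Loc x \<Longrightarrow> \<phi> P = 0"
    and linear: "\<And>r a n. \<phi> (loc_cls x (r * a) n) = r *s \<phi> (loc_cls x a n)"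
    and ev1: "\<phi> (loc_cls x 1 0) = 0"
    by (auto simp: KerEv_def HomLoc_def)
  define f where "f n = \<phi> (loc_cls x 1 (Suc n))" for n
  have U_f: "mult_U f n = \<phi> (loc_cls x 1 n)" for n
    by (cases n) (simp_all add: f_def ev1)
  have "loc_cls x (x * 1) (Suc n) = loc_cls x 1 n" for n
    by (rule loc_cls_eq) (auto simp: loc_rel_def intro: exI[of _ 0])
  then have "x *s mult_U f (Suc n) = mult_U f n" for n
    using linear[of x 1 "Suc n"] by (simp only: U_f)
  then have f_H1: "f \<in> H1 scale x"
    unfolding mem_H1_iff by blast
  have "hom_of_cycle x f P = \<phi> P" for P
  proof (cases "P \<in> Loc x")
    case True
    then obtain a n where "P = loc_cls x a n" by (rule Loc_cases)
    then show ?thesis using linear[of a 1 n] by (simp add: hom_of_cycle_loc_cls[OF f_H1] U_f)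
  qed (simp add: hom_of_cycle_outside_Loc zero)
  then show "\<phi> \<in> hom_of_cycle x ` H1 scale x"
    using f_H1 by (auto intro!: image_eqI[of _ _ f])
qed

lemma bij_betw_hom_of_cycle: "bij_betw (hom_of_cycle x) (H1 scale x) (KerEv scale x)"
  unfolding bij_betw_def
  using inj_on_hom_of_cycle hom_of_cycle_in_KerEv KerEv_subset_hom_of_cycle_image by blast

lemma hom_of_cycle_add:
  "hom_of_cycle x (\<lambda>i. f i + g i) = (\<lambda>P. hom_of_cycle x f P + hom_of_cycle x g P)"
  by (auto simp: hom_of_cycle_def Let_def mult_U_def scale_right_distrib)

lemma hom_of_cycle_scale: "hom_of_cycle x (\<lambda>i. r *s f i) = (\<lambda>P. r *s hom_of_cycle x f P)"
  by (auto simp: hom_of_cycle_def Let_def mult_U_def mult.commute)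

lemma bounded_torsionE:
  assumes "bounded_torsion scale x"
  obtains k where "\<And>j m. (x ^ (k + j)) *s m = 0 \<Longrightarrow> (x ^ k) *s m = 0"
proof -
  obtain k where "\<And>j. {m. (x ^ k) *s m = 0} = {m. (x ^ (k + j)) *s m = 0}"
    using assms by (auto simp: bounded_torsion_def)
  then show ?thesis by (intro that[of k]) blast
qed

lemma H1_eq_zero_if_bounded_torsion:
  assumes "bounded_torsion scale x"
  shows "H1 scale x = {\<lambda>_. 0}"
proof -
  obtain k where k: "\<And>j m. (x ^ (k + j)) *s m = 0 \<Longrightarrow> (x ^ k) *s m = 0"
    using bounded_torsionE[OF assms] by blast
  have "f = (\<lambda>_. 0)" if f: "f \<in> H1 scale x" for f
  proof
    fix j
    have "(x ^ (k + Suc j)) *s mult_U f (Suc j + k) = 0"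
      using H1_scale_power[OF f, where n = 0 and j = "Suc j + k"] by (simp add: ac_simps)
    then have "(x ^ k) *s mult_U f (Suc j + k) = 0" by (rule k)
    then show "f j = 0" using H1_scale_power[OF f, where n = "Suc j" and j = k] by simp
  qed
  moreover have "(\<lambda>_. 0) \<in> H1 scale x" by (simp add: mem_H1_iff mult_U_def)
  ultimately show ?thesis by blast
qed

lemma koszul_d_primitive_in_Bd:
  assumes "H 0 = 0" and "\<And>i. x *s H (Suc i) - H i = d i"
  shows "d \<in> Bd scale x"
proof -
  have "koszul_d scale x (\<lambda>i. H (Suc i)) = d"
  proof
    fix i
    show "koszul_d scale x (\<lambda>i. H (Suc i)) i = d i"
      using assms(1) assms(2)[of i] by (cases i) (simp_all add: koszul_d_eq)
  qed
  then show ?thesis by (auto simp: Bd_def)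
qed

lemma tail_sum_Suc:
  "(\<Sum>t<Suc l. (x ^ t) *s d (n + t)) = d n + x *s (\<Sum>t<l. (x ^ t) *s d (Suc n + t))"
  by (simp add: sum.lessThan_Suc_shift scale_sum_right del: sum.lessThan_Suc)

lemma in_Bd_if_Phi_in_xpowM:
  assumes "bounded_torsion scale x" and "\<And>n. Phi scale x d n \<in> xpowM scale x n"
  shows "d \<in> Bd scale x"
proof -
  obtain k where k: "\<And>j m. (x ^ (k + j)) *s m = 0 \<Longrightarrow> (x ^ k) *s m = 0"
    using bounded_torsionE[OF assms(1)] by blast
  obtain z where z: "\<And>n. Phi scale x d n = (x ^ n) *s z n"
    using assms(2) by (simp add: xpowM_def image_iff) metis
  define Q where "Q n = (\<Sum>t<k. (x ^ t) *s d (n + t))" for n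
  define H where "H n = (x ^ k) *s z (n + k) - Q n" for n
  show ?thesis
  proof (rule koszul_d_primitive_in_Bd)
    show "H 0 = 0" by (simp add: H_def Q_def flip: z) (simp add: Phi_def)
  next
    fix i
    define w where "w = x *s z (Suc (i + k)) - z (i + k) - d (i + k)"
    have "(x ^ (k + i)) *s w
        = Phi scale x d (Suc (i + k)) - Phi scale x d (i + k) - (x ^ (i + k)) *s d (i + k)"
      by (simp add: w_def z scale_right_diff_distrib ac_simps)
    also have "\<dots> = 0" by (simp add: Phi_def)
    finally have w_0: "(x ^ k) *s w = 0" by (rule k)
    have "x *s Q (Suc i) = Q i + (x ^ k) *s d (i + k) - d i"
      using tail_sum_Suc[where l = k and d = d and n = i] by (simp add: Q_def algebra_simps)
    then have "x *s H (Suc i) - H i = (x ^ k) *s w + d i"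
      by (simp add: H_def w_def scale_right_diff_distrib ac_simps)
    then show "x *s H (Suc i) - H i = d i" by (simp add: w_0)
  qed
qed

end

theorem lemma4p2:
  fixes sc :: "'r::comm_ring_1 \<Rightarrow> 'm::ab_group_add \<Rightarrow> 'm" and x :: 'r
  assumes "module sc"
  shows
    \<comment> \<open>(a) the map Phi induces an R-linear epimorphism M[[U]]/(x-U)M[[U]] -> completion\<close>
    "(\<forall>f. Phi sc x f \<in> compl_seqs sc x)
     \<and> (\<forall>f g. Phi sc x (\<lambda>i. f i + g i) = (\<lambda>n. Phi sc x f n + Phi sc x g n))
     \<and> (\<forall>r f. Phi sc x (\<lambda>i. sc r (f i)) = (\<lambda>n. sc r (Phi sc x f n)))
     \<and> (\<forall>f g. (\<lambda>i. f i - g i) \<in> Bd sc x \<longrightarrow> compl_eq sc x (Phi sc x f) (Phi sc x g))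
     \<and> (\<forall>c \<in> compl_seqs sc x. \<exists>f. compl_eq sc x (Phi sc x f) c)
     \<comment> \<open>(b) H_1 is isomorphic to ker(Hom_R(R_x,M) -> M)\<close>
     \<and> (\<exists>\<Psi>. bij_betw \<Psi> (H1 sc x) (KerEv sc x)
          \<and> (\<forall>f\<in>H1 sc x. \<forall>g\<in>H1 sc x. \<Psi> (\<lambda>i. f i + g i) = (\<lambda>P. \<Psi> f P + \<Psi> g P))
          \<and> (\<forall>r. \<forall>f\<in>H1 sc x. \<Psi> (\<lambda>i. sc r (f i)) = (\<lambda>P. sc r (\<Psi> f P))))
     \<comment> \<open>(c) bounded torsion: H_1 = 0 and the induced map is injective, hence an isomorphism\<close>
     \<and> (bounded_torsion sc x \<longrightarrow>
          H1 sc x = {\<lambda>_. 0}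
          \<and> (\<forall>f g. compl_eq sc x (Phi sc x f) (Phi sc x g) \<longrightarrow> (\<lambda>i. f i - g i) \<in> Bd sc x))"
proof -
  interpret module sc by (rule assms)
  have part_b: "\<exists>\<Psi>. bij_betw \<Psi> (H1 sc x) (KerEv sc x)
      \<and> (\<forall>f\<in>H1 sc x. \<forall>g\<in>H1 sc x. \<Psi> (\<lambda>i. f i + g i) = (\<lambda>P. \<Psi> f P + \<Psi> g P))
      \<and> (\<forall>r. \<forall>f\<in>H1 sc x. \<Psi> (\<lambda>i. sc r (f i)) = (\<lambda>P. sc r (\<Psi> f P)))"
    using bij_betw_hom_of_cycle hom_of_cycle_add hom_of_cycle_scale by (intro exI) auto
  have Phi_injective: "(\<lambda>i. f i - g i) \<in> Bd sc x"
    if "bounded_torsion sc x" "compl_eq sc x (Phi sc x f) (Phi sc x g)" for f g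
    using that by (intro in_Bd_if_Phi_in_xpowM) (simp_all add: compl_eq_def Phi_diff)
  show ?thesis
    using Phi_in_compl_seqs Phi_add Phi_scale compl_eq_Phi_if_diff_in_Bd Phi_surj_compl_seqs
      part_b H1_eq_zero_if_bounded_torsion Phi_injective
    by auto
qed

end
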